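(* Let $k\ge3$ be odd, let $G=(V,E)$ be a $k$-uniform power hypergraph, and let $\mathbf x\in\mathbb R^n$ be an H-eigenvector of its Laplacian tensor $\mathcal L$ corresponding to an H-eigenvalue $\lambda\neq1$. Let $e\in E$. (i) If $e$ has exactly one intersectional vertex $i$ and $x_s\neq0$ for some cored vertex $s\in e$, then $(1-\lambda)x_s=x_i$. (ii) If $e$ has exactly two intersectional vertices $i$ and $j$ and $x_s\neq0$ for some cored vertex $s\in e$, then $x_ix_j=(1-\lambda)x_s^2$.
   Context: A $k$-uniform power hypergraph is the $k$-th power $H^k$ of a simple graph $H=(V_H,E_H)$: for each edge $e\in E_H$ add $k-2$ new distinct vertices $i_{e,1},\ldots,i_{e,k-2}$ (different for different edges and not in $V_H$), and take as edges the sets $e\cup\{i_{e,1},\ldots,i_{e,k-2}\}$, $e\in E_H$. For a $k$-uniform hypergraph with vertex set $[n]$, $d_i$ is the number of edges containing $i$; a vertex of degree one is a cored vertex and a vertex of degree larger than one is an intersectional vertex. The Laplacian tensor $\mathcal L=\mathcal D-\mathcal A$ ($\mathcal D$ diagonal with entries $d_i$, $\mathcal A$ with entries $\frac1{(k-1)!}$ at index tuples forming an edge and $0$ otherwise) satisfies $(\mathcal L\mathbf x^{k-1})_i=d_ix_i^{k-1}-\sum_{e\ni i}\prod_{s\in e\setminus\{i\}}x_s$. A real $\lambda$ is an H-eigenvalue with H-eigenvector $\mathbf x\neq0$ if $(\mathcal L\mathbf x^{k-1})_i=\lambda x_i^{k-1}$ for all $i$. *)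

theory Defs
  imports Complex_Main
begin

text \<open>Hypergraphs on the vertex set {0..<n} (standing for [n]), given by their edge set.\<close>

definition simple_graph :: "nat set \<Rightarrow> nat set set \<Rightarrow> bool" where
  "simple_graph VH EH \<longleftrightarrow> finite VH \<and> (\<forall>e\<in>EH. e \<subseteq> VH \<and> card e = 2)"

text \<open>G = (V,E) is the k-th power of the simple graph H = (VH, EH): each edge e of H gets
  k-2 fresh vertices add e (pairwise disjoint for distinct edges, disjoint from VH).\<close>
definition is_power_of :: "nat \<Rightarrow> nat set \<Rightarrow> nat set set \<Rightarrow> nat set \<Rightarrow> nat set set \<Rightarrow> bool" where
  "is_power_of k V E VH EH \<longleftrightarrow> simple_graph VH EH \<and>
     (\<exists>add :: nat set \<Rightarrow> nat set.
        (\<forall>e\<in>EH. card (add e) = k - 2 \<and> finite (add e) \<and> add e \<inter> VH = {}) \<and>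
        (\<forall>e\<in>EH. \<forall>e'\<in>EH. e \<noteq> e' \<longrightarrow> add e \<inter> add e' = {}) \<and>
        V = VH \<union> (\<Union>e\<in>EH. add e) \<and>
        E = (\<lambda>e. e \<union> add e) ` EH)"

definition power_hypergraph :: "nat \<Rightarrow> nat \<Rightarrow> nat set set \<Rightarrow> bool" where
  "power_hypergraph k n E \<longleftrightarrow> (\<exists>VH EH. is_power_of k {0..<n} E VH EH)"

definition hdeg :: "nat set set \<Rightarrow> nat \<Rightarrow> nat" where
  "hdeg E i = card {e\<in>E. i \<in> e}"

definition cored :: "nat set set \<Rightarrow> nat \<Rightarrow> bool" where
  "cored E i \<longleftrightarrow> hdeg E i = 1"

definition intersectional :: "nat set set \<Rightarrow> nat \<Rightarrow> bool" where
  "intersectional E i \<longleftrightarrow> hdeg E i > 1"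

definition lap_apply :: "nat \<Rightarrow> nat set set \<Rightarrow> (nat \<Rightarrow> real) \<Rightarrow> nat \<Rightarrow> real" where
  "lap_apply k E x i = real (hdeg E i) * x i ^ (k - 1) - (\<Sum>e\<in>{e\<in>E. i \<in> e}. \<Prod>s\<in>e - {i}. x s)"

definition lap_H_eigenpair :: "nat \<Rightarrow> nat \<Rightarrow> nat set set \<Rightarrow> real \<Rightarrow> (nat \<Rightarrow> real) \<Rightarrow> bool" where
  "lap_H_eigenpair k n E lam x \<longleftrightarrow> (\<exists>i<n. x i \<noteq> 0) \<and>
     (\<forall>i<n. lap_apply k E x i = lam * x i ^ (k - 1))"

end

theory Submission
  imports Defs
begin

text \<open>At a cored vertex t of an edge e the eigen-equation involves e alone; multiplied by x t
  it reads (1 - lam) x t ^ k = prod of x over e. The right-hand side does not depend on t, so for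
  odd k and lam \<noteq> 1 all cored vertices of e carry the same value. Writing the eigen-equation at a
  cored s with x s \<noteq> 0, all factors except those at the set I of intersectional vertices equal
  x s; cancelling them gives (1 - lam) x s ^ |I| = prod of x over I.\<close>

lemma power_hypergraph_finite:
  assumes "power_hypergraph k n E"
  shows "finite E"
proof -
  obtain VH EH where "is_power_of k {0..<n} E VH EH"
    using assms unfolding power_hypergraph_def by blast
  then obtain add where "simple_graph VH EH" and E: "E = (\<lambda>e. e \<union> add e) ` EH"
    unfolding is_power_of_def by blast
  then have "EH \<subseteq> Pow VH" and "finite VH" unfolding simple_graph_def by auto
  then have "finite EH" by (intro finite_subset[of EH "Pow VH"]) simp_all
  then show ?thesis unfolding E by simp
qed

lemma power_hypergraph_edge:
  assumes "power_hypergraph k n E" and "k \<ge> 2" and "e \<in> E"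
  shows "e \<subseteq> {0..<n}" and "card e = k"
proof -
  obtain VH EH add where sg: "simple_graph VH EH"
    and add: "\<forall>e\<in>EH. card (add e) = k - 2 \<and> finite (add e) \<and> add e \<inter> VH = {}"
    and V: "{0..<n} = VH \<union> (\<Union>e\<in>EH. add e)"
    and E: "E = (\<lambda>e. e \<union> add e) ` EH"
    using assms(1) unfolding power_hypergraph_def is_power_of_def by blast
  obtain e0 where e0: "e0 \<in> EH" and e: "e = e0 \<union> add e0"
    using assms(3) E by blast
  have "e0 \<subseteq> VH" and "card e0 = 2" and "finite VH"
    using sg e0 unfolding simple_graph_def by auto
  then show "e \<subseteq> {0..<n}" unfolding V e using e0 by blast
  have "finite e0" using \<open>e0 \<subseteq> VH\<close> \<open>finite VH\<close> by (rule finite_subset)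
  moreover have "finite (add e0)" and "e0 \<inter> add e0 = {}"
    using add e0 \<open>e0 \<subseteq> VH\<close> by blast+
  ultimately have "card e = card e0 + card (add e0)"
    unfolding e by (rule card_Un_disjoint)
  then show "card e = k" using add e0 \<open>card e0 = 2\<close> assms(2) by simp
qed

lemma cored_if_not_intersectional:
  assumes "finite E" and "e \<in> E" and "v \<in> e" and "\<not> intersectional E v"
  shows "cored E v"
proof -
  have "{e\<in>E. v \<in> e} \<noteq> {}" using assms(2,3) by blast
  then have "hdeg E v > 0" unfolding hdeg_def using assms(1) by (simp add: card_gt_0_iff)
  then show ?thesis using assms(4) unfolding cored_def intersectional_def by simp
qed

lemma lap_apply_cored:
  assumes "cored E t" and "e \<in> E" and "t \<in> e"
  shows "lap_apply k E x t = x t ^ (k - 1) - (\<Prod>u\<in>e - {t}. x u)"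
proof -
  have "card {e\<in>E. t \<in> e} = 1" using assms(1) unfolding cored_def hdeg_def .
  then obtain f where f: "{e\<in>E. t \<in> e} = {f}" by (rule card_1_singletonE)
  moreover have "e \<in> {e\<in>E. t \<in> e}" using assms(2,3) by simp
  ultimately have "{e\<in>E. t \<in> e} = {e}" by simp
  then show ?thesis using assms(1) unfolding lap_apply_def cored_def by simp
qed

lemma eigenpair_cored:
  assumes "lap_H_eigenpair k n E lam x" and "e \<in> E" and "e \<subseteq> {0..<n}"
    and "t \<in> e" and "cored E t"
  shows "(1 - lam) * x t ^ (k - 1) = (\<Prod>u\<in>e - {t}. x u)"
proof -
  have "t < n" using assms(3,4) by auto
  then have "lap_apply k E x t = lam * x t ^ (k - 1)"
    using assms(1) unfolding lap_H_eigenpair_def by blast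
  then show ?thesis using lap_apply_cored[OF assms(5,2,4)] by (simp add: algebra_simps)
qed

lemma eigenpair_cored_vertices_equal:
  assumes "lap_H_eigenpair k n E lam x" and "odd k" and "lam \<noteq> 1"
    and "e \<in> E" and "e \<subseteq> {0..<n}"
    and "s \<in> e" and "cored E s" and "t \<in> e" and "cored E t"
  shows "x s = x t"
proof -
  have "finite e" using assms(5) by (rule finite_subset) simp
  have k: "k = Suc (k - 1)" using assms(2) by (cases k) auto
  have edge_product: "(1 - lam) * x v ^ k = (\<Prod>u\<in>e. x u)" if "v \<in> e" "cored E v" for v
  proof -
    have "(\<Prod>u\<in>e. x u) = x v * (\<Prod>u\<in>e - {v}. x u)"
      by (rule prod.remove[OF \<open>finite e\<close> that(1)])
    also have "\<dots> = (1 - lam) * (x v * x v ^ (k - 1))"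
      using eigenpair_cored[OF assms(1,4,5) that] by simp
    also have "x v * x v ^ (k - 1) = x v ^ k"
      by (subst (2) k) (rule power_Suc[symmetric])
    finally show ?thesis by simp
  qed
  have "(1 - lam) * x s ^ k = (1 - lam) * x t ^ k"
    using edge_product[OF assms(6,7)] edge_product[OF assms(8,9)] by simp
  then have "x s ^ k = x t ^ k" using assms(3) by simp
  have "x s = root k (x s ^ k)" by (rule odd_real_root_power_cancel[OF assms(2), symmetric])
  also have "\<dots> = root k (x t ^ k)" by (rule arg_cong) fact
  also have "\<dots> = x t" by (rule odd_real_root_power_cancel[OF assms(2)])
  finally show ?thesis .
qed

lemma prod_constant_off_subset:
  assumes "finite A" and "I \<subseteq> A" and "\<And>u. u \<in> A - I \<Longrightarrow> f u = c"
  shows "(\<Prod>u\<in>A. f u) = (\<Prod>u\<in>I. f u) * c ^ (card A - card I)"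
proof -
  have "(\<Prod>u\<in>A. f u) = (\<Prod>u\<in>A - I. f u) * (\<Prod>u\<in>I. f u)"
    by (rule prod.subset_diff[OF assms(2,1)])
  also have "(\<Prod>u\<in>A - I. f u) = c ^ card (A - I)"
    using assms(3) by simp
  also have "card (A - I) = card A - card I"
    using finite_subset[OF assms(2,1)] assms(2) by (rule card_Diff_subset)
  finally show ?thesis by (simp only: mult.commute)
qed

lemma eigenpair_intersectional_product:
  assumes "power_hypergraph k n E" and "lap_H_eigenpair k n E lam x"
    and "odd k" and "k \<ge> 2" and "lam \<noteq> 1" and "e \<in> E"
    and "s \<in> e" and "cored E s" and "x s \<noteq> 0"
  defines "I \<equiv> {v\<in>e. intersectional E v}"
  shows "(1 - lam) * x s ^ card I = (\<Prod>i\<in>I. x i)"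
proof -
  have finE: "finite E" using assms(1) by (rule power_hypergraph_finite)
  have e_sub: "e \<subseteq> {0..<n}" and card_e: "card e = k"
    using power_hypergraph_edge[OF assms(1,4,6)] by auto
  have fin_e: "finite e" using e_sub by (rule finite_subset) simp
  have I_sub: "I \<subseteq> e - {s}"
    using assms(8) unfolding I_def cored_def intersectional_def by auto
  have others: "x u = x s" if u: "u \<in> (e - {s}) - I" for u
  proof -
    have "u \<in> e" and "\<not> intersectional E u" using u unfolding I_def by auto
    with finE assms(6) have "cored E u" by (rule cored_if_not_intersectional)
    with \<open>u \<in> e\<close> show ?thesis
      by (rule eigenpair_cored_vertices_equal[OF assms(2,3,5,6) e_sub assms(7,8), symmetric])
  qed
  define m where "m = k - 1 - card I"
  have card_I: "card I + m = k - 1"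
    using card_mono[OF _ I_sub] fin_e assms(7) card_e unfolding m_def by auto
  have "(1 - lam) * x s ^ card I * x s ^ m = (1 - lam) * x s ^ (k - 1)"
    by (simp only: mult.assoc card_I flip: power_add)
  also have "\<dots> = (\<Prod>u\<in>e - {s}. x u)"
    using eigenpair_cored[OF assms(2,6) e_sub assms(7,8)] .
  also have "\<dots> = (\<Prod>i\<in>I. x i) * x s ^ m"
    using prod_constant_off_subset[OF _ I_sub others] fin_e card_e assms(7)
    unfolding m_def by simp
  finally have "(1 - lam) * x s ^ card I * x s ^ m = (\<Prod>i\<in>I. x i) * x s ^ m" .
  moreover have "x s ^ m \<noteq> 0" using assms(9) by simp
  ultimately show ?thesis by (rule mult_right_cancel[THEN iffD1, rotated])
qed

theorem lemma4p1:
  fixes k n :: nat and E :: "nat set set" and lam :: real and x :: "nat \<Rightarrow> real" and e :: "nat set"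
  assumes "k \<ge> 3" and "odd k"
    and "power_hypergraph k n E"
    and "lap_H_eigenpair k n E lam x"
    and "lam \<noteq> 1"
    and "e \<in> E"
  shows "(\<forall>i s. {v\<in>e. intersectional E v} = {i} \<and> s \<in> e \<and> cored E s \<and> x s \<noteq> 0
              \<longrightarrow> (1 - lam) * x s = x i)
       \<and> (\<forall>i j s. i \<noteq> j \<and> {v\<in>e. intersectional E v} = {i, j} \<and> s \<in> e \<and> cored E s \<and> x s \<noteq> 0
              \<longrightarrow> x i * x j = (1 - lam) * x s ^ 2)"
proof -
  have "k \<ge> 2" using assms(1) by simp
  note relation = eigenpair_intersectional_product[OF assms(3,4,2) \<open>k \<ge> 2\<close> assms(5,6)]
  show ?thesis
  proof (intro conjI allI impI)
    fix i s assume "{v\<in>e. intersectional E v} = {i} \<and> s \<in> e \<and> cored E s \<and> x s \<noteq> 0"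
    then have I: "{v\<in>e. intersectional E v} = {i}" and "s \<in> e" "cored E s" "x s \<noteq> 0" by auto
    from relation[OF this(2-4)] show "(1 - lam) * x s = x i" unfolding I by simp
  next
    fix i j s assume "i \<noteq> j \<and> {v\<in>e. intersectional E v} = {i, j} \<and> s \<in> e \<and> cored E s \<and> x s \<noteq> 0"
    then have "i \<noteq> j" and I: "{v\<in>e. intersectional E v} = {i, j}" and "s \<in> e" "cored E s" "x s \<noteq> 0"
      by auto
    from relation[OF this(3-5)] show "x i * x j = (1 - lam) * x s ^ 2"
      unfolding I using \<open>i \<noteq> j\<close> by (simp add: power2_eq_square)
  qed
qed

end
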